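(* Let $S_1,S_2$ be numerical semigroups and $a_1,a_2$ coprime positive integers with $a_2\in S_1$ and $a_1\in S_2$, and let $S=a_1S_1+a_2S_2$. For $i=1,2$ put $Q_i(x)=\mathrm P_S(x)/\mathrm P_{S_i}(x^{a_i})$. Then $Q_i(0)=1$, $Q_i(x)$ is a monic polynomial, and its nonzero coefficients alternate between $1$ and $-1$.
   Context: A numerical semigroup is a submonoid of $(\mathbb N,+)$ with finite complement in $\mathbb N$; $aA=\{ax:x\in A\}$, $A+B=\{x+y:x\in A,y\in B\}$. For a numerical semigroup $T$, $\mathrm P_T(x)=(1-x)\sum_{t\in T}x^t$. (In the paper, $S$ is called the gluing $a_1S_1+_{a_1a_2}a_2S_2$.) *)

theory Defs
  imports "HOL-Computational_Algebra.Computational_Algebra"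
begin

definition numerical_semigroup :: "nat set \<Rightarrow> bool" where
  "numerical_semigroup T \<longleftrightarrow>
     0 \<in> T \<and> (\<forall>x\<in>T. \<forall>y\<in>T. x + y \<in> T) \<and> finite (UNIV - T)"

definition semigroup_P :: "nat set \<Rightarrow> real fps" where
  "semigroup_P T = (1 - fps_X) * Abs_fps (\<lambda>n. if n \<in> T then 1 else 0)"

definition gluing :: "nat \<Rightarrow> nat set \<Rightarrow> nat \<Rightarrow> nat set \<Rightarrow> nat set" where
  "gluing a1 S1 a2 S2 = {a1 * s1 + a2 * s2 | s1 s2. s1 \<in> S1 \<and> s2 \<in> S2}"

definition alternating_coeffs :: "real poly \<Rightarrow> bool" where
  "alternating_coeffs q \<longleftrightarrow>
     (\<forall>j. coeff q j \<noteq> 0 \<longrightarrow> coeff q j = 1 \<or> coeff q j = -1) \<and>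
     (\<forall>j k. j < k \<and> coeff q j \<noteq> 0 \<and> coeff q k \<noteq> 0 \<and>
            (\<forall>m. j < m \<and> m < k \<longrightarrow> coeff q m = 0) \<longrightarrow> coeff q k = - coeff q j)"

end

theory Submission
  imports Defs "HOL-Number_Theory.Cong"
begin

text \<open>Let M = a1 N + a2 S2 and let E be its Apery set with respect to a1.
  Every element of S is e + a1 s with e in E and s in S1: take a representation
  a1 s1 + a2 s2 with s2 minimal; otherwise a2 in S1 and coprimality would lower s2.
  The decomposition is unique because the elements of E are pairwise incongruent
  modulo a1. Hence the generating series of S is that of E times that of S1 at x^a1,
  and since the series of E is (1 - x^a1) times that of M, P_S(x) = P_M(x) P_S1(x^a1),
  i.e. Q_1 = P_M. For a numerical semigroup T the coefficient of x^n in P_T is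
  [n in T] - [n - 1 in T]: it is 1 at 0 and at the conductor, vanishes beyond it,
  and its nonzero values mark the alternating ends of gaps and runs of elements.\<close>

definition indicator_fps :: "nat set \<Rightarrow> real fps" where
  "indicator_fps A = Abs_fps (\<lambda>n. if n \<in> A then 1 else 0)"

definition apery_set :: "nat set \<Rightarrow> nat \<Rightarrow> nat set" where
  "apery_set M a = {m \<in> M. a \<le> m \<longrightarrow> m - a \<notin> M}"

lemma semigroup_P_eq: "semigroup_P T = (1 - fps_X) * indicator_fps T"
  by (simp add: semigroup_P_def indicator_fps_def)

lemma one_minus_X_power_mult_nth:
  "((1 - fps_X ^ a) * f) $ n = f $ n - (if a \<le> n then f $ (n - a) else 0)"
  for f :: "'a::comm_ring_1 fps"
  by (simp add: algebra_simps fps_X_power_mult_right_nth)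

lemma semigroup_P_nth:
  "semigroup_P T $ n = (if n \<in> T then 1 else 0) - (if 0 < n \<and> n - 1 \<in> T then 1 else 0)"
  using one_minus_X_power_mult_nth[of 1 "indicator_fps T" n]
  by (auto simp: semigroup_P_eq indicator_fps_def)

lemma alternating_coeffs_semigroup_P:
  assumes "fps_of_poly q = semigroup_P T"
  shows "alternating_coeffs q"
proof -
  have coeff_q: "coeff q n = (if n \<in> T then 1 else 0) - (if 0 < n \<and> n - 1 \<in> T then 1 else 0)" for n
    using arg_cong[OF assms, of "\<lambda>f. f $ n"] by (simp add: semigroup_P_nth)
  show ?thesis
    unfolding alternating_coeffs_def
  proof (intro conjI allI impI)
    fix j k :: nat
    assume jk: "j < k \<and> coeff q j \<noteq> 0 \<and> coeff q k \<noteq> 0 \<and> (\<forall>m. j < m \<and> m < k \<longrightarrow> coeff q m = 0)"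
    have "j + d \<in> T \<longleftrightarrow> j \<in> T" if "j + d < k" for d
      using that
    proof (induction d)
      case (Suc d)
      then have "coeff q (j + Suc d) = 0" using jk by auto
      then show ?case using Suc by (auto simp: coeff_q split: if_splits)
    qed simp
    from this[of "k - 1 - j"] have "k - 1 \<in> T \<longleftrightarrow> j \<in> T" using jk by simp
    then show "coeff q k = - coeff q j" using jk by (auto simp: coeff_q split: if_splits)
  qed (auto simp: coeff_q split: if_splits intro: gr0I)
qed

lemma conductor_exists:
  assumes "finite (UNIV - T)"
  obtains L :: nat where "\<forall>m\<ge>L. m \<in> T" and "0 < L \<Longrightarrow> L - 1 \<notin> T"
proof (cases "UNIV - T = {}")
  case True
  then show ?thesis using that[of 0] by auto
next
  case False
  show ?thesis
  proof (rule that[of "Suc (Max (UNIV - T))"])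
    show "\<forall>m\<ge>Suc (Max (UNIV - T)). m \<in> T"
      using Max_ge[OF assms] by (auto simp: not_less_eq_eq[symmetric])
    show "Suc (Max (UNIV - T)) - 1 \<notin> T"
      using Max_in[OF assms False] by simp
  qed
qed

lemma semigroup_P_poly:
  assumes "0 \<in> T" and "finite (UNIV - T)"
  obtains q where "fps_of_poly q = semigroup_P T" and "poly q 0 = 1" and "lead_coeff q = 1"
    and "alternating_coeffs q"
proof -
  obtain L where above: "\<forall>m\<ge>L. m \<in> T" and gap: "0 < L \<Longrightarrow> L - 1 \<notin> T"
    using conductor_exists[OF assms(2)] by blast
  have vanish: "semigroup_P T $ n = 0" if "L < n" for n
    using above that by (simp add: semigroup_P_nth)
  define q where "q = Abs_poly (\<lambda>n. semigroup_P T $ n)"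
  have coeff_q: "coeff q = (\<lambda>n. semigroup_P T $ n)"
    unfolding q_def using vanish by (rule coeff_Abs_poly)
  have fps_q: "fps_of_poly q = semigroup_P T"
    by (rule fps_ext) (simp add: coeff_q)
  have top: "coeff q L = 1"
    using assms(1) above gap by (cases "L = 0") (auto simp: coeff_q semigroup_P_nth)
  have "degree q = L"
    using top vanish by (intro antisym degree_le le_degree) (auto simp: coeff_q)
  then have "lead_coeff q = 1" using top by simp
  moreover have "poly q 0 = 1"
    using assms(1) by (simp add: poly_0_coeff_0 coeff_q semigroup_P_nth)
  ultimately show ?thesis
    using that fps_q alternating_coeffs_semigroup_P[OF fps_q] by blast
qed

lemma indicator_fps_compose_X_power:
  assumes "0 < a"
  shows "indicator_fps B oo fps_X ^ a = indicator_fps ((*) a ` B)"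
proof (rule fps_ext)
  fix n
  have "n \<in> (*) a ` B \<longleftrightarrow> a dvd n \<and> n div a \<in> B"
    using assms by force
  then show "(indicator_fps B oo fps_X ^ a) $ n = indicator_fps ((*) a ` B) $ n"
    by (simp add: fps_nth_compose_X_power indicator_fps_def)
qed

lemma semigroup_P_compose_X_power:
  assumes "0 < a"
  shows "semigroup_P T oo fps_X ^ a = (1 - fps_X ^ a) * indicator_fps ((*) a ` T)"
proof -
  have X0: "(fps_X ^ a :: real fps) $ 0 = 0"
    using assms by simp
  show ?thesis
    unfolding semigroup_P_eq fps_compose_mult_distrib[OF X0] fps_compose_sub_distrib
    by (simp add: fps_X_fps_compose_startby0[OF X0] indicator_fps_compose_X_power[OF assms])
qed

lemma indicator_fps_mult:
  assumes inj: "inj_on (\<lambda>(x, y). x + y) (A \<times> B)"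
  shows "indicator_fps A * indicator_fps B = indicator_fps ((\<lambda>(x, y). x + y) ` (A \<times> B))"
    (is "_ = indicator_fps ?C")
proof (rule fps_ext)
  fix n
  have "(indicator_fps A * indicator_fps B) $ n = (\<Sum>i=0..n. if i \<in> A \<and> n - i \<in> B then 1 else 0)"
    by (auto simp: fps_mult_nth indicator_fps_def intro: sum.cong)
  also have "\<dots> = indicator_fps ?C $ n"
  proof (cases "n \<in> ?C")
    case True
    then obtain x y where xy: "x \<in> A" "y \<in> B" "n = x + y"
      by auto
    have "i \<in> A \<and> n - i \<in> B \<longleftrightarrow> i = x" if "i \<le> n" for i
      using inj_onD[OF inj, of "(i, n - i)" "(x, y)"] xy that by auto
    then have "(\<Sum>i=0..n. if i \<in> A \<and> n - i \<in> B then 1 else 0) = (\<Sum>i=0..n. if i = x then 1 else (0::real))"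
      by (intro sum.cong) auto
    then show ?thesis
      using True xy by (simp add: indicator_fps_def)
  next
    case False
    then have "\<not> (i \<in> A \<and> n - i \<in> B)" if "i \<le> n" for i
      using that by (metis (no_types, lifting) SigmaI case_prod_conv image_eqI le_add_diff_inverse)
    then show ?thesis
      using False by (simp add: indicator_fps_def sum.neutral)
  qed
  finally show "(indicator_fps A * indicator_fps B) $ n = indicator_fps ?C $ n" .
qed

lemma add_mult_mem:
  fixes M :: "nat set"
  assumes "\<forall>m\<in>M. m + a \<in> M" and "m \<in> M"
  shows "m + a * t \<in> M"
  proof (induction t)
  case (Suc t)
  then show ?case
    using assms(1) by (metis add.assoc mult_Suc_right add.commute)
qed (use assms(2) in simp)

lemma apery_set_indicator_fps:
  assumes "\<forall>m\<in>M. m + a \<in> M"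
  shows "(1 - fps_X ^ a) * indicator_fps M = indicator_fps (apery_set M a)"
proof (rule fps_ext)
  fix n
  have "a \<le> n \<Longrightarrow> n - a \<in> M \<Longrightarrow> n \<in> M"
    using assms by (metis le_add_diff_inverse2)
  then show "((1 - fps_X ^ a) * indicator_fps M) $ n = indicator_fps (apery_set M a) $ n"
    by (auto simp: one_minus_X_power_mult_nth indicator_fps_def apery_set_def)
qed

lemma inj_on_mod_apery_set:
  assumes closed: "\<forall>m\<in>M. m + a \<in> M"
  shows "inj_on (\<lambda>e. e mod a) (apery_set M a)"
proof (rule linorder_inj_onI')
  fix x y
  assume x: "x \<in> apery_set M a" and y: "y \<in> apery_set M a" and "x < y"
  show "x mod a \<noteq> y mod a"
  proof
    assume "x mod a = y mod a"
    then obtain t where t: "y = x + a * t"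
      using \<open>x < y\<close> by (metis less_imp_le_nat mod_eq_dvd_iff_nat dvdE le_add_diff_inverse)
    then obtain u where u: "t = Suc u"
      using \<open>x < y\<close> by (cases t) auto
    have "y - a = x + a * u" and "a \<le> y"
      using t u by auto
    then show False
      using x y add_mult_mem[OF closed, of x u] by (simp add: apery_set_def)
  qed
qed

lemma inj_on_add_apery_set:
  assumes "\<forall>m\<in>M. m + a \<in> M"
  shows "inj_on (\<lambda>(x, y). x + y) (apery_set M a \<times> (*) a ` B)"
proof (rule inj_onI, clarify)
  fix e e' k k'
  assume e: "e \<in> apery_set M a" "e' \<in> apery_set M a" and sum: "e + a * k = e' + a * k'"
  then have "e mod a = e' mod a"
    by (metis mod_mult_self2)
  then have "e = e'"
    using inj_onD[OF inj_on_mod_apery_set[OF assms]] e by blast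
  then show "e = e' \<and> a * k = a * k'"
    using sum by simp
qed

lemma gluing_commute: "gluing a1 S1 a2 S2 = gluing a2 S2 a1 S1"
  unfolding gluing_def by (auto simp: add.commute)

lemma numerical_semigroup_mult_mem:
  assumes "numerical_semigroup T" and "a \<in> T"
  shows "k * a \<in> T"
  using assms by (induction k) (auto simp: numerical_semigroup_def)

lemma gluing_UNIV_add_closed: "\<forall>m\<in>gluing a UNIV b S. m + a \<in> gluing a UNIV b S"
proof
  fix m
  assume "m \<in> gluing a UNIV b S"
  then obtain k s where "m = a * k + b * s" "s \<in> S"
    unfolding gluing_def by blast
  then have "m + a = a * Suc k + b * s \<and> s \<in> S"
    by simp
  then show "m + a \<in> gluing a UNIV b S"
    unfolding gluing_def by blast
qed

lemma apery_set_gluing_UNIV_subset: "apery_set (gluing a UNIV b S) a \<subseteq> (*) b ` S"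
proof
  fix e
  assume e: "e \<in> apery_set (gluing a UNIV b S) a"
  then obtain k s where ks: "e = a * k + b * s" "s \<in> S"
    unfolding apery_set_def gluing_def by blast
  have "k = 0"
  proof (rule ccontr)
    assume "k \<noteq> 0"
    then obtain k' where "k = Suc k'"
      using not0_implies_Suc by blast
    then have "a \<le> e" and "e - a = a * k' + b * s"
      using ks by auto
    then show False
      using e ks(2) unfolding apery_set_def gluing_def by blast
  qed
  then show "e \<in> (*) b ` S"
    using ks by (simp add: rev_image_eqI)
qed

lemma gluing_UNIV_apery_descent:
  assumes "coprime a b" and "0 < a" and "s \<in> S"
    and "b * s \<notin> apery_set (gluing a UNIV b S) a"
  obtains t m where "t \<in> S" and "s = t + a * m" and "0 < m"
proof -
  have "b * s \<in> gluing a UNIV b S"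
    using assms(3) unfolding gluing_def by force
  then obtain j t where jt: "a \<le> b * s" "b * s - a = a * j + b * t" "t \<in> S"
    using assms(4) unfolding apery_set_def gluing_def by blast
  then have eq: "b * s = a * Suc j + b * t"
    by simp
  then have "b * t < b * s"
    using assms(2) by simp
  then have "t < s"
    by simp
  have "b * (s - t) = a * Suc j"
    using eq by (simp add: diff_mult_distrib2)
  then have "a dvd s - t"
    using assms(1) by (metis coprime_dvd_mult_right_iff dvd_triv_left)
  then obtain m where m: "s - t = a * m"
    by blast
  then have "0 < m"
    using \<open>t < s\<close> by (cases m) auto
  then show ?thesis
    using that[of t m] m jt(3) \<open>t < s\<close> by simp
qed

lemma gluing_eq_apery_set_plus:
  assumes S1: "numerical_semigroup S1" "a2 \<in> S1" and "coprime a1 a2" and "0 < a1"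
  shows "gluing a1 S1 a2 S2
    = (\<lambda>(x, y). x + y) ` (apery_set (gluing a1 UNIV a2 S2) a1 \<times> (*) a1 ` S1)"
    (is "_ = ?R")
proof
  show "?R \<subseteq> gluing a1 S1 a2 S2"
  proof clarify
    fix e k
    assume "e \<in> apery_set (gluing a1 UNIV a2 S2) a1" and "k \<in> S1"
    moreover from this obtain s where "s \<in> S2" "e = a2 * s"
      using apery_set_gluing_UNIV_subset by blast
    ultimately show "e + a1 * k \<in> gluing a1 S1 a2 S2"
      unfolding gluing_def by (auto simp: add.commute)
  qed
next
  have "a1 * s1 + a2 * s2 \<in> ?R" if "s1 \<in> S1" "s2 \<in> S2" for s1 s2
    using that
  proof (induction s2 arbitrary: s1 rule: less_induct)
    case (less s2)
    show ?case
    proof (cases "a2 * s2 \<in> apery_set (gluing a1 UNIV a2 S2) a1")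
      case True
      have "(a2 * s2, a1 * s1) \<in> apery_set (gluing a1 UNIV a2 S2) a1 \<times> (*) a1 ` S1"
        using True less.prems(1) by blast
      then show ?thesis
        by (rule rev_image_eqI) simp
    next
      case False
      then obtain t m where t: "t \<in> S2" "s2 = t + a1 * m" "0 < m"
        using gluing_UNIV_apery_descent[OF assms(3,4) less.prems(2)] by blast
      have "s1 + m * a2 \<in> S1"
        using S1 less.prems(1) numerical_semigroup_mult_mem
        by (auto simp: numerical_semigroup_def)
      then have "a1 * (s1 + m * a2) + a2 * t \<in> ?R"
        using less.IH[of t] t assms(4) by simp
      then show ?thesis
        using t(2) by (simp add: algebra_simps)
    qed
  qed
  then show "gluing a1 S1 a2 S2 \<subseteq> ?R"
    unfolding gluing_def by blast
qed

lemma numerical_semigroup_gluing_UNIV: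
  assumes S: "numerical_semigroup S" and "coprime a b" and "0 < a"
  shows "numerical_semigroup (gluing a UNIV b S)"
proof -
  let ?M = "gluing a UNIV b S"
  have "0 \<in> ?M"
    using S unfolding numerical_semigroup_def gluing_def by force
  moreover have "x + y \<in> ?M" if xy: "x \<in> ?M" "y \<in> ?M" for x y
  proof -
    obtain k s k' s' where "x = a * k + b * s" "y = a * k' + b * s'" "s \<in> S" "s' \<in> S"
      using xy unfolding gluing_def by blast
    moreover from this have "x + y = a * (k + k') + b * (s + s') \<and> s + s' \<in> S"
      using S by (simp add: algebra_simps numerical_semigroup_def)
    ultimately show ?thesis
      unfolding gluing_def by blast
  qed
  moreover have "finite (UNIV - ?M)"
  proof -
    obtain F where F: "\<And>n. F \<le> n \<Longrightarrow> n \<in> S"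
      using S finite_nat_set_iff_bounded unfolding numerical_semigroup_def
      by (metis DiffI UNIV_I not_le)
    obtain x where x: "[b * x = 1] (mod a)"
      using cong_solve_coprime_nat[of b a] assms(2) by (auto simp: coprime_commute)
    have "n \<in> ?M" if n: "b * (a + a * F) \<le> n" for n
    proof -
      \<comment> \<open>b s is congruent to n since b x = 1 (mod a); the term a F pushes s past F\<close>
      define s where "s = (x * n) mod a + a * F"
      have "s \<in> S"
        using F assms(3) by (simp add: s_def trans_le_add2)
      have "s \<le> a + a * F"
        using assms(3) by (simp add: s_def)
      then have le: "b * s \<le> n"
        using n by (meson le_trans mult_le_mono2)
      have "[s = x * n] (mod a)"
        by (simp add: s_def cong_def)
      then have "[b * s = (b * x) * n] (mod a)"
        by (metis cong_scalar_left mult.assoc)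
      also have "[(b * x) * n = 1 * n] (mod a)"
        using x by (rule cong_mult) simp
      finally obtain k where "n = k * a + b * s"
        using cong_le_nat[OF le] by (auto simp: cong_sym_eq)
      then show ?thesis
        using \<open>s \<in> S\<close> unfolding gluing_def by (force simp: mult.commute)
    qed
    then have "UNIV - ?M \<subseteq> {..< b * (a + a * F)}"
      by (auto simp: not_less[symmetric])
    then show ?thesis
      by (rule finite_subset) simp
  qed
  ultimately show ?thesis
    unfolding numerical_semigroup_def by blast
qed

lemma semigroup_P_gluing:
  assumes "numerical_semigroup S1" and "a2 \<in> S1" and "coprime a1 a2" and "0 < a1"
  shows "semigroup_P (gluing a1 S1 a2 S2)
    = semigroup_P (gluing a1 UNIV a2 S2) * (semigroup_P S1 oo fps_X ^ a1)"
proof -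
  let ?M = "gluing a1 UNIV a2 S2"
  have closed: "\<forall>m\<in>?M. m + a1 \<in> ?M"
    by (rule gluing_UNIV_add_closed)
  have "indicator_fps (gluing a1 S1 a2 S2)
      = indicator_fps (apery_set ?M a1) * indicator_fps ((*) a1 ` S1)"
    unfolding gluing_eq_apery_set_plus[OF assms]
    by (rule indicator_fps_mult[OF inj_on_add_apery_set[OF closed], symmetric])
  also have "\<dots> = (1 - fps_X ^ a1) * indicator_fps ?M * indicator_fps ((*) a1 ` S1)"
    by (simp add: apery_set_indicator_fps[OF closed])
  finally show ?thesis
    by (simp add: semigroup_P_eq[of "gluing _ _ _ _"] semigroup_P_eq[of ?M]
        semigroup_P_compose_X_power[OF assms(4)] ac_simps)
qed

lemma semigroup_P_gluing_div:
  assumes "numerical_semigroup S1" and "a2 \<in> S1" and "coprime a1 a2" and "0 < a1"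
  shows "semigroup_P (gluing a1 S1 a2 S2) / (semigroup_P S1 oo fps_X ^ a1)
    = semigroup_P (gluing a1 UNIV a2 S2)"
proof -
  have "(semigroup_P S1 oo fps_X ^ a1) $ 0 = 1"
    using assms(1) by (simp add: semigroup_P_nth numerical_semigroup_def)
  then have "semigroup_P S1 oo fps_X ^ a1 \<noteq> 0"
    by (metis fps_zero_nth zero_neq_one)
  then show ?thesis
    by (simp add: semigroup_P_gluing[OF assms])
qed

lemma gluing_quotient_alternating_poly:
  assumes "numerical_semigroup S1" and "numerical_semigroup S2" and "0 < a1"
    and "coprime a1 a2" and "a2 \<in> S1"
  shows "\<exists>q :: real poly.
      fps_of_poly q = semigroup_P (gluing a1 S1 a2 S2) / (semigroup_P S1 oo fps_X ^ a1)
      \<and> poly q 0 = 1 \<and> lead_coeff q = 1 \<and> alternating_coeffs q"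
proof -
  have "numerical_semigroup (gluing a1 UNIV a2 S2)"
    using numerical_semigroup_gluing_UNIV assms(2,4,3) .
  then obtain q where "fps_of_poly q = semigroup_P (gluing a1 UNIV a2 S2)"
    and "poly q 0 = 1" "lead_coeff q = 1" "alternating_coeffs q"
    using semigroup_P_poly unfolding numerical_semigroup_def by blast
  then show ?thesis
    using semigroup_P_gluing_div[OF assms(1,5,4,3)] by metis
qed

theorem corollary6:
  fixes S1 S2 :: "nat set" and a1 a2 :: nat
  assumes "numerical_semigroup S1" and "numerical_semigroup S2"
    and "a1 > 0" and "a2 > 0" and "coprime a1 a2"
    and "a2 \<in> S1" and "a1 \<in> S2"
  shows "\<forall>(Si, ai) \<in> {(S1, a1), (S2, a2)}.
           \<exists>q :: real poly.
             fps_of_poly q = semigroup_P (gluing a1 S1 a2 S2) / (semigroup_P Si oo (fps_X ^ ai))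
             \<and> poly q 0 = 1 \<and> lead_coeff q = 1 \<and> alternating_coeffs q"
proof -
  have "coprime a2 a1"
    using assms(5) by (simp add: coprime_commute)
  then show ?thesis
    using gluing_quotient_alternating_poly[OF assms(1,2,3,5,6)]
      gluing_quotient_alternating_poly[OF assms(2,1,4) _ assms(7)]
    by (simp add: gluing_commute[of a2 S2])
qed

end
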